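(* Suppose $(X,y)$ is orthogonal separable. Let $(W_1,w_2,\lambda)$ be a KKT point (B-subdifferential sense) of the non-convex max-margin problem, and suppose it contains two neurons $i_+,i_-$ with $w_{2,i_+}\ne0$, $w_{2,i_-}\ne0$ whose associated diagonal matrices $\hat D_{i_+},\hat D_{i_-}$ (as in the context) satisfy $$\hat D_{i_+}\ge\mathrm{diag}(\mathbb I(y=1)),\qquad\hat D_{i_-}\ge\mathrm{diag}(\mathbb I(y=-1)).$$ Then $\lambda$ is dual feasible, i.e. $\max_{u:\|u\|_2\le1}|\lambda^T(Xu)_+|\le1$.
   Context: Binary setting: $X\in\mathbb R^{N\times d}$ rows $x_n$, $y\in\{\pm1\}^N$, $Y=\mathrm{diag}(y)$. $(X,y)$ is orthogonal separable if $x_n^Tx_{n'}>0$ whenever $y_n=y_{n'}$ and $x_n^Tx_{n'}\le0$ whenever $y_n\ne y_{n'}$. Non-convex max-margin problem: $\min\frac12(\|W_1\|_F^2+\|w_2\|_2^2)$ s.t. $Y(XW_1)_+w_2\ge\mathbf 1$. KKT point (B-subdifferential): $Y\lambda\ge0$, primal feasibility, $\lambda_n(y_n(x_n^TW_1)_+w_2-1)=0$, $w_2=(XW_1)_+^T\lambda$, and for each $i$, $w_{1,i}=w_{2,i}X^T\hat D_i\lambda$ where $\hat D_i$ is diagonal with $(\hat D_i)_{nn}=1$ if $x_n^Tw_{1,i}>0$, $0$ if $x_n^Tw_{1,i}<0$, $\in\{0,1\}$ if $x_n^Tw_{1,i}=0$. Matrix inequalities between diagonal matrices are entrywise; $\mathbb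 I(y=1)$ is the $0/1$ indicator vector. *)

theory Defs
  imports "HOL-Analysis.Analysis"
begin

text \<open>Data: samples indexed by a finite type 'n, features real^'d, neurons indexed by a
finite type 'm. x n is the n-th row of X, y n in {1,-1} the label.
The first-layer weight matrix W1 is represented by its columns w1 i :: real^'d,
the second layer by w2 :: real^'m, the dual variable by lam :: real^'n.\<close>

definition relu :: "real \<Rightarrow> real" where
  "relu t = max t 0"

definition labels :: "('n \<Rightarrow> real) \<Rightarrow> bool" where
  "labels y \<longleftrightarrow> (\<forall>n. y n = 1 \<or> y n = -1)"

definition orth_separable :: "('n \<Rightarrow> real^'d) \<Rightarrow> ('n \<Rightarrow> real) \<Rightarrow> bool" where
  "orth_separable x y \<longleftrightarrow>
     (\<forall>n n'. y n = y n' \<longrightarrow> x n \<bullet> x n' > 0) \<and>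
     (\<forall>n n'. y n \<noteq> y n' \<longrightarrow> x n \<bullet> x n' \<le> 0)"

definition net_out :: "('n \<Rightarrow> real^'d) \<Rightarrow> ('m::finite \<Rightarrow> real^'d) \<Rightarrow> real^'m \<Rightarrow> 'n \<Rightarrow> real" where
  "net_out x w1 w2 n = (\<Sum>i\<in>UNIV. relu (x n \<bullet> w1 i) * w2 $ i)"

text \<open>D i is the diagonal of the matrix \<open>\<hat>D_i\<close> (as a function 'n => real).\<close>
definition admissible_D :: "('n \<Rightarrow> real^'d) \<Rightarrow> (real^'d) \<Rightarrow> ('n \<Rightarrow> real) \<Rightarrow> bool" where
  "admissible_D x w Dd \<longleftrightarrow>
     (\<forall>n. (x n \<bullet> w > 0 \<longrightarrow> Dd n = 1) \<and> (x n \<bullet> w < 0 \<longrightarrow> Dd n = 0) \<and>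
          (x n \<bullet> w = 0 \<longrightarrow> Dd n = 0 \<or> Dd n = 1))"

definition kkt_point ::
  "('n::finite \<Rightarrow> real^'d) \<Rightarrow> ('n \<Rightarrow> real) \<Rightarrow> ('m::finite \<Rightarrow> real^'d) \<Rightarrow> real^'m \<Rightarrow> real^'n
     \<Rightarrow> ('m \<Rightarrow> 'n \<Rightarrow> real) \<Rightarrow> bool" where
  "kkt_point x y w1 w2 lam D \<longleftrightarrow>
     (\<forall>n. y n * lam $ n \<ge> 0) \<and>
     (\<forall>n. y n * net_out x w1 w2 n \<ge> 1) \<and>
     (\<forall>n. lam $ n * (y n * net_out x w1 w2 n - 1) = 0) \<and>
     (\<forall>i. w2 $ i = (\<Sum>n\<in>UNIV. lam $ n * relu (x n \<bullet> w1 i))) \<and>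
     (\<forall>i. admissible_D x (w1 i) (D i)) \<and>
     (\<forall>i. w1 i = w2 $ i *\<^sub>R (\<Sum>n\<in>UNIV. (D i n * lam $ n) *\<^sub>R x n))"

definition dual_feasible :: "('n::finite \<Rightarrow> real^'d) \<Rightarrow> real^'n \<Rightarrow> bool" where
  "dual_feasible x lam \<longleftrightarrow>
     (\<forall>u::real^'d. norm u \<le> 1 \<longrightarrow> \<bar>\<Sum>n\<in>UNIV. lam $ n * relu (x n \<bullet> u)\<bar> \<le> 1)"

end

theory Submission
  imports Defs
begin

text \<open>Fix a class \<open>C\<close> (the samples with label \<open>s\<close>), put \<open>\<mu> = s \<lambda>\<close>, which is nonnegative on
\<open>C\<close> and nonpositive off \<open>C\<close>, and \<open>a = \<Sum>\<^sub>n\<^sub>\<in>\<^sub>C \<mu>\<^sub>n x\<^sub>n\<close>. Since all inner products within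
\<open>C\<close> are nonnegative, \<open>\<Sum>\<^sub>n\<^sub>\<in>\<^sub>C \<mu>\<^sub>n (x\<^sub>n\<^sup>T u)\<^sub>+\<close> is the inner product of \<open>u\<close> with a partial sum of
\<open>a\<close>, whose norm is at most \<open>\<parallel>a\<parallel>\<close>; so dual feasibility follows from \<open>\<parallel>a\<parallel> \<le> 1\<close> for both classes.
The neuron whose \<open>\<hat>D\<close> covers \<open>C\<close> gives this bound: its weight is \<open>c v\<close> with
\<open>v = \<Sum>\<^sub>n \<hat>D\<^sub>n \<mu>\<^sub>n x\<^sub>n\<close>, orthogonal separability makes \<open>x\<^sub>n\<^sup>T v\<close> nonnegative exactly on \<open>C\<close>, whence
\<open>\<parallel>a\<parallel>\<^sup>2 \<le> a\<^sup>T v\<close>; the stationarity condition \<open>c = \<Sum>\<^sub>n \<mu>\<^sub>n (x\<^sub>n\<^sup>T c v)\<^sub>+\<close> forces \<open>a\<^sup>T v = 1\<close> if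
\<open>c > 0\<close>, and \<open>a\<^sup>T v = 0\<close> if \<open>c < 0\<close> because then \<open>\<hat>D = 1\<close> on \<open>C\<close> forces \<open>x\<^sub>n\<^sup>T v = 0\<close> there.\<close>

definition orth_split :: "('n \<Rightarrow> 'v::real_inner) \<Rightarrow> 'n set \<Rightarrow> bool" where
  "orth_split x C \<longleftrightarrow>
     (\<forall>m n. (m \<in> C \<longleftrightarrow> n \<in> C) \<longrightarrow> 0 \<le> x m \<bullet> x n) \<and>
     (\<forall>m n. (m \<in> C \<longleftrightarrow> n \<notin> C) \<longrightarrow> x m \<bullet> x n \<le> 0)"

lemma orth_separable_imp_orth_split:
  assumes "labels y" and "orth_separable x y" and "s = 1 \<or> s = -1"
  shows "orth_split x {n. y n = s}"
  using assms unfolding labels_def orth_separable_def orth_split_def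
  by (smt (verit, best) mem_Collect_eq)

lemma inner_sum_sum_nonneg:
  fixes x :: "'a \<Rightarrow> 'v::real_inner"
  assumes "\<And>i j. i \<in> B \<Longrightarrow> j \<in> C \<Longrightarrow> 0 \<le> f i * g j * (x i \<bullet> x j)"
  shows "0 \<le> (\<Sum>i\<in>B. f i *\<^sub>R x i) \<bullet> (\<Sum>j\<in>C. g j *\<^sub>R x j)"
  unfolding inner_sum_left inner_sum_right
  using assms by (auto intro!: sum_nonneg simp: mult_ac)

lemma norm_sum_le_norm_sum_superset:
  fixes x :: "'a \<Rightarrow> 'v::real_inner"
  assumes "finite C" and "B \<subseteq> C" and f: "\<And>i. i \<in> C \<Longrightarrow> 0 \<le> f i"
    and x: "\<And>i j. i \<in> C \<Longrightarrow> j \<in> C \<Longrightarrow> 0 \<le> x i \<bullet> x j"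
  shows "norm (\<Sum>i\<in>B. f i *\<^sub>R x i) \<le> norm (\<Sum>i\<in>C. f i *\<^sub>R x i)"
proof -
  let ?b = "\<Sum>i\<in>B. f i *\<^sub>R x i" and ?r = "\<Sum>i\<in>C - B. f i *\<^sub>R x i"
  have sum_C: "(\<Sum>i\<in>C. f i *\<^sub>R x i) = ?b + ?r"
    using sum.subset_diff[OF assms(2,1)] by (simp add: add.commute)
  have "0 \<le> ?b \<bullet> ?r"
    by (rule inner_sum_sum_nonneg) (use assms(2) f x in auto)
  then have "?b \<bullet> ?b \<le> (?b + ?r) \<bullet> (?b + ?r)"
    by (simp add: inner_add_left inner_add_right inner_commute)
  then show ?thesis
    unfolding sum_C by (simp add: norm_le)
qed

lemma sum_relu_inner_le_norm:
  fixes x :: "'a \<Rightarrow> 'v::real_inner"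
  assumes "finite C" and f: "\<And>i. i \<in> C \<Longrightarrow> 0 \<le> f i"
    and x: "\<And>i j. i \<in> C \<Longrightarrow> j \<in> C \<Longrightarrow> 0 \<le> x i \<bullet> x j"
  shows "(\<Sum>n\<in>C. f n * relu (x n \<bullet> u)) \<le> norm (\<Sum>n\<in>C. f n *\<^sub>R x n) * norm u"
proof -
  define T where "T = C \<inter> {n. 0 < x n \<bullet> u}"
  have "(\<Sum>n\<in>C. f n * relu (x n \<bullet> u)) = (\<Sum>n\<in>T. f n * (x n \<bullet> u))"
    unfolding T_def sum.inter_restrict[OF \<open>finite C\<close>] by (rule sum.cong) (auto simp: relu_def)
  also have "\<dots> = (\<Sum>n\<in>T. f n *\<^sub>R x n) \<bullet> u"
    by (simp add: inner_sum_left)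
  also have "\<dots> \<le> norm (\<Sum>n\<in>T. f n *\<^sub>R x n) * norm u"
    by (rule norm_cauchy_schwarz)
  also have "\<dots> \<le> norm (\<Sum>n\<in>C. f n *\<^sub>R x n) * norm u"
    by (intro mult_right_mono norm_sum_le_norm_sum_superset) (use assms in \<open>auto simp: T_def\<close>)
  finally show ?thesis .
qed

lemma sum_relu_inner_bounds:
  fixes x :: "'a \<Rightarrow> 'v::real_inner"
  assumes "finite C" and f: "\<And>i. i \<in> C \<Longrightarrow> 0 \<le> f i"
    and "\<And>i j. i \<in> C \<Longrightarrow> j \<in> C \<Longrightarrow> 0 \<le> x i \<bullet> x j"
    and "norm (\<Sum>n\<in>C. f n *\<^sub>R x n) \<le> 1" and "norm u \<le> 1"
  shows "0 \<le> (\<Sum>n\<in>C. f n * relu (x n \<bullet> u)) \<and> (\<Sum>n\<in>C. f n * relu (x n \<bullet> u)) \<le> 1"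
proof
  show "0 \<le> (\<Sum>n\<in>C. f n * relu (x n \<bullet> u))"
    using f by (auto intro!: sum_nonneg simp: relu_def)
  have "norm (\<Sum>n\<in>C. f n *\<^sub>R x n) * norm u \<le> 1"
    using assms(4,5) by (simp add: mult_le_one)
  moreover have "(\<Sum>n\<in>C. f n * relu (x n \<bullet> u)) \<le> norm (\<Sum>n\<in>C. f n *\<^sub>R x n) * norm u"
    by (rule sum_relu_inner_le_norm) (use assms in auto)
  ultimately show "(\<Sum>n\<in>C. f n * relu (x n \<bullet> u)) \<le> 1" by linarith
qed

lemma admissible_D_01:
  assumes "admissible_D x w Dd"
  shows "Dd n = 0 \<or> Dd n = 1"
  using assms unfolding admissible_D_def by (metis linorder_neqE_linordered_idom)

lemma inner_sum_orth_split:
  assumes "orth_split x C"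
    and g_C: "\<And>n. n \<in> C \<Longrightarrow> 0 \<le> g n" and g_not_C: "\<And>n. n \<notin> C \<Longrightarrow> g n \<le> 0"
  shows "m \<in> C \<Longrightarrow> 0 \<le> x m \<bullet> (\<Sum>n\<in>A. g n *\<^sub>R x n)"
    and "m \<notin> C \<Longrightarrow> x m \<bullet> (\<Sum>n\<in>A. g n *\<^sub>R x n) \<le> 0"
proof -
  have "m \<in> C \<Longrightarrow> 0 \<le> g n * (x m \<bullet> x n)" and "m \<notin> C \<Longrightarrow> g n * (x m \<bullet> x n) \<le> 0" for n
    using assms(1) g_C[of n] g_not_C[of n] unfolding orth_split_def
    by (cases "n \<in> C"; simp add: mult_nonpos_nonpos mult_nonneg_nonpos mult_nonpos_nonneg)+
  then show "m \<in> C \<Longrightarrow> 0 \<le> x m \<bullet> (\<Sum>n\<in>A. g n *\<^sub>R x n)"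
    and "m \<notin> C \<Longrightarrow> x m \<bullet> (\<Sum>n\<in>A. g n *\<^sub>R x n) \<le> 0"
    by (simp_all add: inner_sum_right sum_nonneg sum_nonpos)
qed

lemma norm_class_sum_le_1:
  fixes x :: "'n::finite \<Rightarrow> real^'d"
  assumes orth: "orth_split x C"
    and mu_C: "\<And>n. n \<in> C \<Longrightarrow> 0 \<le> \<mu> n" and mu_not_C: "\<And>n. n \<notin> C \<Longrightarrow> \<mu> n \<le> 0"
    and adm: "admissible_D x w Dd" and D_C: "\<And>n. n \<in> C \<Longrightarrow> Dd n = 1"
    and w: "w = c *\<^sub>R (\<Sum>n\<in>UNIV. (Dd n * \<mu> n) *\<^sub>R x n)"
    and c: "c = (\<Sum>n\<in>UNIV. \<mu> n * relu (x n \<bullet> w))"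
    and "c \<noteq> 0"
  shows "norm (\<Sum>n\<in>C. \<mu> n *\<^sub>R x n) \<le> 1"
proof -
  define v where "v = (\<Sum>n\<in>UNIV. (Dd n * \<mu> n) *\<^sub>R x n)"
  define a where "a = (\<Sum>n\<in>C. \<mu> n *\<^sub>R x n)"
  define r where "r = (\<Sum>n\<in>-C. (Dd n * \<mu> n) *\<^sub>R x n)"
  have D_nonneg: "0 \<le> Dd n" for n
    using admissible_D_01[OF adm, of n] by auto
  have v_C: "n \<in> C \<Longrightarrow> 0 \<le> x n \<bullet> v" and v_not_C: "n \<notin> C \<Longrightarrow> x n \<bullet> v \<le> 0" for n
    unfolding v_def using inner_sum_orth_split[OF orth, of "\<lambda>n. Dd n * \<mu> n"]
    by (simp_all add: D_nonneg mu_C mu_not_C mult_nonneg_nonpos)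
  have "v = (\<Sum>n\<in>C. (Dd n * \<mu> n) *\<^sub>R x n) + r"
    unfolding v_def r_def using sum.subset_diff[of C UNIV "\<lambda>n. (Dd n * \<mu> n) *\<^sub>R x n"]
    by (simp add: Compl_eq_Diff_UNIV add.commute)
  then have v_eq: "v = a + r"
    by (simp add: a_def D_C)
  have "0 \<le> a \<bullet> r"
    unfolding a_def r_def using orth
    by (intro inner_sum_sum_nonneg)
       (auto simp: orth_split_def mu_C D_nonneg mu_not_C mult_nonneg_nonpos mult_nonpos_nonpos)
  then have a_sq: "a \<bullet> a \<le> a \<bullet> v"
    by (simp add: v_eq inner_add_right)
  have a_v: "a \<bullet> v = (\<Sum>n\<in>C. \<mu> n * (x n \<bullet> v))"
    by (simp add: a_def inner_sum_left)
  have "a \<bullet> v \<le> 1"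
  proof (cases "0 < c")
    case True
    then have relu_w: "relu (x n \<bullet> w) = (if n \<in> C then c * (x n \<bullet> v) else 0)" for n
      using v_C[of n] v_not_C[of n] mult_nonneg_nonpos[of c "x n \<bullet> v"]
      by (auto simp: w v_def[symmetric] relu_def)
    have "c = (\<Sum>n\<in>UNIV. if n \<in> C then \<mu> n * (c * (x n \<bullet> v)) else 0)"
      by (subst c) (rule sum.cong; simp add: relu_w)
    also have "\<dots> = (\<Sum>n\<in>C. \<mu> n * (c * (x n \<bullet> v)))"
      by (simp flip: sum.inter_restrict)
    also have "\<dots> = c * (a \<bullet> v)"
      by (simp add: a_v sum_distrib_left mult_ac)
    finally show ?thesis
      using \<open>c \<noteq> 0\<close> by simp
  next
    case False
    then have "c < 0" using \<open>c \<noteq> 0\<close> by simp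
    have "x n \<bullet> v = 0" if "n \<in> C" for n
    proof -
      have "\<not> x n \<bullet> w < 0"
        using adm D_C[OF that] unfolding admissible_D_def by auto
      then have "x n \<bullet> v \<le> 0"
        using \<open>c < 0\<close> by (simp add: w v_def[symmetric] not_less zero_le_mult_iff)
      then show ?thesis using v_C[OF that] by simp
    qed
    then show ?thesis by (simp add: a_v)
  qed
  with a_sq show ?thesis
    by (simp add: a_def[symmetric] norm_eq_sqrt_inner)
qed

lemma dual_feasible_of_class_norms:
  fixes x :: "'n::finite \<Rightarrow> real^'d"
  assumes lab: "labels y" and sep: "orth_separable x y" and sign: "\<And>n. 0 \<le> y n * lam $ n"
    and pos: "norm (\<Sum>n\<in>{n. y n = 1}. lam $ n *\<^sub>R x n) \<le> 1"
    and neg: "norm (\<Sum>n\<in>{n. y n = -1}. (- lam $ n) *\<^sub>R x n) \<le> 1"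
  shows "dual_feasible x lam"
  unfolding dual_feasible_def
proof (intro allI impI)
  fix u :: "real^'d"
  assume u: "norm u \<le> 1"
  let ?S = "\<lambda>C f. \<Sum>n\<in>C. f n * relu (x n \<bullet> u)"
  have same_class: "y i = y j \<Longrightarrow> 0 \<le> x i \<bullet> x j" for i j
    using sep unfolding orth_separable_def by (simp add: less_imp_le)
  have class_sign: "y n = 1 \<Longrightarrow> 0 \<le> lam $ n" "y n = -1 \<Longrightarrow> 0 \<le> - lam $ n" for n
    using sign[of n] by auto
  have pos_bounds: "0 \<le> ?S {n. y n = 1} (\<lambda>n. lam $ n) \<and> ?S {n. y n = 1} (\<lambda>n. lam $ n) \<le> 1"
    by (rule sum_relu_inner_bounds[OF _ _ _ pos u]) (use class_sign same_class in auto)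
  have neg_bounds: "0 \<le> ?S {n. y n = -1} (\<lambda>n. - lam $ n) \<and> ?S {n. y n = -1} (\<lambda>n. - lam $ n) \<le> 1"
    by (rule sum_relu_inner_bounds[OF _ _ _ neg u]) (use class_sign same_class in auto)
  have "{n. y n = -1} = UNIV - {n. y n = 1}"
    using lab unfolding labels_def by force
  then have "?S UNIV (\<lambda>n. lam $ n) = ?S {n. y n = 1} (\<lambda>n. lam $ n) - ?S {n. y n = -1} (\<lambda>n. - lam $ n)"
    using sum.subset_diff[of "{n. y n = 1}" UNIV "\<lambda>n. lam $ n * relu (x n \<bullet> u)"]
    by (simp add: sum_negf)
  with pos_bounds neg_bounds show "\<bar>\<Sum>n\<in>UNIV. lam $ n * relu (x n \<bullet> u)\<bar> \<le> 1"
    by linarith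
qed

theorem proposition4:
  fixes x :: "'n::finite \<Rightarrow> real^'d"
    and y :: "'n \<Rightarrow> real"
    and w1 :: "'m::finite \<Rightarrow> real^'d"
    and w2 :: "real^'m"
    and lam :: "real^'n"
    and D :: "'m \<Rightarrow> 'n \<Rightarrow> real"
    and ip im :: 'm
  assumes "labels y"
    and "orth_separable x y"
    and "kkt_point x y w1 w2 lam D"
    and "w2 $ ip \<noteq> 0" and "w2 $ im \<noteq> 0"
    and "\<forall>n. D ip n \<ge> (if y n = 1 then 1 else 0)"
    and "\<forall>n. D im n \<ge> (if y n = -1 then 1 else 0)"
  shows "dual_feasible x lam"
proof -
  note kkt = assms(3)[unfolded kkt_point_def]
  have sign: "\<And>n. 0 \<le> y n * lam $ n"
    and w2_eq: "\<And>i. w2 $ i = (\<Sum>n\<in>UNIV. lam $ n * relu (x n \<bullet> w1 i))"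
    and adm: "\<And>i. admissible_D x (w1 i) (D i)"
    and w1_eq: "\<And>i. w1 i = w2 $ i *\<^sub>R (\<Sum>n\<in>UNIV. (D i n * lam $ n) *\<^sub>R x n)"
    using kkt by blast+
  have pos_sign: "y n = 1 \<Longrightarrow> 0 \<le> lam $ n" "y n \<noteq> 1 \<Longrightarrow> lam $ n \<le> 0"
    and neg_sign: "y n = -1 \<Longrightarrow> lam $ n \<le> 0" "y n \<noteq> -1 \<Longrightarrow> 0 \<le> lam $ n" for n
    using sign[of n] assms(1)[unfolded labels_def, rule_format, of n] by auto
  have D_ip: "y n = 1 \<Longrightarrow> D ip n = 1" and D_im: "y n = -1 \<Longrightarrow> D im n = 1" for n
    using assms(6,7)[rule_format, of n] admissible_D_01[OF adm, of ip n] admissible_D_01[OF adm, of im n]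
    by auto
  have split_pos: "orth_split x {n. y n = 1}" and split_neg: "orth_split x {n. y n = -1}"
    using orth_separable_imp_orth_split[OF assms(1,2)] by auto
  have "norm (\<Sum>n\<in>{n. y n = 1}. lam $ n *\<^sub>R x n) \<le> 1"
    by (rule norm_class_sum_le_1[OF split_pos _ _ adm _ w1_eq w2_eq assms(4)])
       (simp_all add: pos_sign D_ip)
  moreover have "norm (\<Sum>n\<in>{n. y n = -1}. (- lam $ n) *\<^sub>R x n) \<le> 1"
  proof (rule norm_class_sum_le_1[OF split_neg _ _ adm])
    show "w1 im = (- w2 $ im) *\<^sub>R (\<Sum>n\<in>UNIV. (D im n * - lam $ n) *\<^sub>R x n)"
      by (subst w1_eq) (simp add: sum_negf)
    show "- w2 $ im = (\<Sum>n\<in>UNIV. - lam $ n * relu (x n \<bullet> w1 im))"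
      by (subst w2_eq) (simp add: sum_negf)
  qed (simp_all add: neg_sign D_im assms(5))
  ultimately show ?thesis
    by (rule dual_feasible_of_class_norms[OF assms(1,2) sign])
qed

end
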